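(* Let $\Gamma$ be a represented pointclass satisfying the standing assumptions and (uniformly computably) closed under the operation $(A_n)_{n\in\mathbb{N}}\mapsto\{01^\mathbb{N}\}\cup\bigcup_{n\in\mathbb{N}}1^n0A_n$. Then $\mathrm{FindWS}_\Gamma\equiv_W\widehat{\mathrm{FindWS}_\Gamma}$.
   Context: $f\leq_W g$ iff there are computable partial $K,H:\subseteq\mathbb{N}^\mathbb{N}\to\mathbb{N}^\mathbb{N}$ such that for every realizer $G$ of $g$, $p\mapsto K(\langle p,G(H(p))\rangle)$ realizes $f$; $\equiv_W$ induced equivalence. $\widehat{f}(x_0,x_1,\ldots)=(f(x_0),f(x_1),\ldots)$. Win/lose games: players 1,2, choices $\{0,1\}$, turn function $d:\{0,1\}^*\to\{1,2\}$ (lookup table), winning set for player 1 (complement for player 2); $wA=\{wp\mid p\in A\}$. $\mathrm{FindWS}_\Gamma$: input a win/lose game whose player-1 winning set is given by a $\Gamma$-name and in which player 1 has a winning strategy; output a strategy profile ($\{0,1\}^*\to\{0,1\}$) in which one strategy is winning (necessarily player 1's). Standing assumptions on a represented pointclass $\Gamma$ of subsets of $\{0,1\}^\mathbb{N}$: every win/lose game with player-1 winning set in $\Gamma$ is determined; $\emptyset,\{0,1\}^\mathbb{N}\in\Gamma$; $\Gamma$ is uniformly computably closed under rescaling $(w,A)\mapsto wA$ and its inverse and under intersection with clopen sets. *)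

theory Defs
  imports Main "HOL-Library.Nat_Bijection"
begin

section \<open>Partial recursive functions (unary, via Cantor pairing), as in Mathlib's Nat.Partrec\<close>

definition rfind_opt :: "(nat \<Rightarrow> nat option) \<Rightarrow> nat option" where
  "rfind_opt f =
     (let P = (\<lambda>n. f n = Some 0 \<and> (\<forall>m<n. \<exists>k. f m = Some (Suc k)))
      in if (\<exists>n. P n) then Some (LEAST n. P n) else None)"

inductive partrec :: "(nat \<Rightarrow> nat option) \<Rightarrow> bool" where
  zero: "partrec (\<lambda>_. Some 0)"
| succ: "partrec (\<lambda>n. Some (Suc n))"
| left: "partrec (\<lambda>n. Some (fst (prod_decode n)))"
| right: "partrec (\<lambda>n. Some (snd (prod_decode n)))"
| pair: "partrec f \<Longrightarrow> partrec g \<Longrightarrow>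
     partrec (\<lambda>n. Option.bind (f n) (\<lambda>a. Option.bind (g n) (\<lambda>b. Some (prod_encode (a, b)))))"
| comp: "partrec f \<Longrightarrow> partrec g \<Longrightarrow> partrec (\<lambda>n. Option.bind (g n) f)"
| prec: "partrec f \<Longrightarrow> partrec g \<Longrightarrow>
     partrec (\<lambda>p. case prod_decode p of (a, n) \<Rightarrow>
        rec_nat (f a) (\<lambda>y IH. Option.bind IH (\<lambda>i. g (prod_encode (a, prod_encode (y, i))))) n)"
| rfind: "partrec f \<Longrightarrow> partrec (\<lambda>a. rfind_opt (\<lambda>n. f (prod_encode (a, n))))"

type_synonym baire = "nat \<Rightarrow> nat"

text \<open>A partial recursive phi acts as a Type-2 machine: output digit n on input p is v iff
  for the least prefix length k at which phi(prefix, n) answers non-zero, the answer is v+1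
  (answer 0 means: read more input).\<close>
definition t2_out :: "(nat \<Rightarrow> nat option) \<Rightarrow> baire \<Rightarrow> nat \<Rightarrow> nat \<Rightarrow> bool" where
  "t2_out phi p n v \<longleftrightarrow>
     (\<exists>k. phi (prod_encode (list_encode (map p [0..<k]), n)) = Some (Suc v) \<and>
          (\<forall>j<k. phi (prod_encode (list_encode (map p [0..<j]), n)) = Some 0))"

definition t2_computes :: "(nat \<Rightarrow> nat option) \<Rightarrow> baire \<Rightarrow> baire \<Rightarrow> bool" where
  "t2_computes phi p q \<longleftrightarrow> (\<forall>n. t2_out phi p n (q n))"

definition bpair :: "baire \<Rightarrow> baire \<Rightarrow> baire" where
  "bpair p q = (\<lambda>n. if even n then p (n div 2) else q (n div 2))"

definition bfst :: "baire \<Rightarrow> baire" where "bfst r = (\<lambda>n. r (2 * n))"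
definition bsnd :: "baire \<Rightarrow> baire" where "bsnd r = (\<lambda>n. r (2 * n + 1))"

definition btuple :: "(nat \<Rightarrow> baire) \<Rightarrow> baire" where
  "btuple ps = (\<lambda>n. case prod_decode n of (i, j) \<Rightarrow> ps i j)"

definition bcomp :: "baire \<Rightarrow> nat \<Rightarrow> baire" where
  "bcomp r i = (\<lambda>j. r (prod_encode (i, j)))"

type_synonym 'x rep = "baire \<Rightarrow> 'x option"   \<comment> \<open>partial surjection onto its range\<close>
type_synonym ('x, 'y) mvf = "'x \<Rightarrow> 'y set"      \<comment> \<open>dom f = {x. f x \<noteq> {}}\<close>

definition realizer :: "'u rep \<Rightarrow> 'v rep \<Rightarrow> ('u, 'v) mvf \<Rightarrow> (baire \<Rightarrow> baire) \<Rightarrow> bool" where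
  "realizer dU dV g G \<longleftrightarrow>
     (\<forall>p u. dU p = Some u \<and> g u \<noteq> {} \<longrightarrow> (\<exists>v. dV (G p) = Some v \<and> v \<in> g u))"

text \<open>Realizers are modelled as total functions; this is harmless since the definition
  explicitly demands that H maps names of points in dom f to names of points in dom g,
  exactly where every (partial) realizer of g is defined.\<close>
definition weihrauch_le ::
  "'x rep \<Rightarrow> 'y rep \<Rightarrow> ('x, 'y) mvf \<Rightarrow> 'u rep \<Rightarrow> 'v rep \<Rightarrow> ('u, 'v) mvf \<Rightarrow> bool" where
  "weihrauch_le dX dY f dU dV g \<longleftrightarrow>
     (\<exists>phiK phiH. partrec phiK \<and> partrec phiH \<and>
        (\<forall>p x. dX p = Some x \<and> f x \<noteq> {} \<longrightarrow>
           (\<exists>h. t2_computes phiH p h \<and> (\<exists>u. dU h = Some u \<and> g u \<noteq> {}) \<and>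
              (\<forall>G. realizer dU dV g G \<longrightarrow>
                 (\<exists>k. t2_computes phiK (bpair p (G h)) k \<and>
                      (\<exists>y. dY k = Some y \<and> y \<in> f x))))))"

definition weihrauch_eq ::
  "'x rep \<Rightarrow> 'y rep \<Rightarrow> ('x, 'y) mvf \<Rightarrow> 'u rep \<Rightarrow> 'v rep \<Rightarrow> ('u, 'v) mvf \<Rightarrow> bool" where
  "weihrauch_eq dX dY f dU dV g \<longleftrightarrow>
     weihrauch_le dX dY f dU dV g \<and> weihrauch_le dU dV g dX dY f"

definition seq_rep :: "'x rep \<Rightarrow> (nat \<Rightarrow> 'x) rep" where
  "seq_rep d r = (if (\<forall>i. d (bcomp r i) \<noteq> None) then Some (\<lambda>i. the (d (bcomp r i))) else None)"

definition parallelization :: "('x, 'y) mvf \<Rightarrow> (nat \<Rightarrow> 'x, nat \<Rightarrow> 'y) mvf" where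
  "parallelization f xs = {ys. \<forall>n. ys n \<in> f (xs n)}"

text \<open>Choices 0,1 are False,True; Cantor space is nat => bool; finite words are bool lists.\<close>

fun bl_code :: "bool list \<Rightarrow> nat" where
  "bl_code [] = 0"
| "bl_code (b # w) = 2 * bl_code w + (if b then 2 else 1)"

definition prepend :: "bool list \<Rightarrow> (nat \<Rightarrow> bool) \<Rightarrow> (nat \<Rightarrow> bool)" where
  "prepend w p = (\<lambda>n. if n < length w then w ! n else p (n - length w))"

definition rescale :: "bool list \<Rightarrow> (nat \<Rightarrow> bool) set \<Rightarrow> (nat \<Rightarrow> bool) set" where
  "rescale w A = prepend w ` A"

definition unscale :: "bool list \<Rightarrow> (nat \<Rightarrow> bool) set \<Rightarrow> (nat \<Rightarrow> bool) set" where
  "unscale w A = {p. prepend w p \<in> A}"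

definition cylinder :: "bool list \<Rightarrow> (nat \<Rightarrow> bool) set" where
  "cylinder w = {p. \<forall>i<length w. p i = w ! i}"

definition clopen_of :: "bool list list \<Rightarrow> (nat \<Rightarrow> bool) set" where
  "clopen_of ws = (\<Union>w\<in>set ws. cylinder w)"

datatype player = P1 | P2

type_synonym profile = "bool list \<Rightarrow> bool"

fun hist :: "profile \<Rightarrow> nat \<Rightarrow> bool list" where
  "hist s 0 = []"
| "hist s (Suc n) = hist s n @ [s (hist s n)]"

definition play :: "profile \<Rightarrow> (nat \<Rightarrow> bool)" where
  "play s = (\<lambda>n. s (hist s n))"

text \<open>A strategy of player i is (the restriction to i's positions of) a function on words.\<close>
definition winning :: "(bool list \<Rightarrow> player) \<Rightarrow> (nat \<Rightarrow> bool) set \<Rightarrow> player \<Rightarrow> profile \<Rightarrow> bool" where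
  "winning d A i s \<longleftrightarrow>
     (\<forall>t. (\<forall>w. d w = i \<longrightarrow> t w = s w) \<longrightarrow> (play t \<in> A \<longleftrightarrow> i = P1))"

definition determined :: "(bool list \<Rightarrow> player) \<Rightarrow> (nat \<Rightarrow> bool) set \<Rightarrow> bool" where
  "determined d A \<longleftrightarrow> (\<exists>s. winning d A P1 s \<or> winning d A P2 s)"

type_synonym game = "(bool list \<Rightarrow> player) \<times> (nat \<Rightarrow> bool) set"

definition game_rep :: "(nat \<Rightarrow> bool) set rep \<Rightarrow> game rep" where
  "game_rep delta r = (case delta (bsnd r) of
      None \<Rightarrow> None
    | Some A \<Rightarrow> Some (\<lambda>w. if bfst r (bl_code w) = 0 then P1 else P2, A))"

definition profile_rep :: "profile rep" where
  "profile_rep r = Some (\<lambda>w. r (bl_code w) \<noteq> 0)"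

definition FindWS :: "(game, profile) mvf" where
  "FindWS G = (case G of (d, A) \<Rightarrow>
     if (\<exists>s. winning d A P1 s) then {s. winning d A P1 s \<or> winning d A P2 s} else {})"

definition word_name :: "bool list \<Rightarrow> baire" where "word_name w = (\<lambda>_. bl_code w)"
definition clopen_name :: "bool list list \<Rightarrow> baire" where
  "clopen_name ws = (\<lambda>_. list_encode (map bl_code ws))"

definition standing_assumptions :: "(nat \<Rightarrow> bool) set rep \<Rightarrow> bool" where
  "standing_assumptions delta \<longleftrightarrow>
     (\<forall>A\<in>ran delta. \<forall>d. determined d A) \<and>
     {} \<in> ran delta \<and> UNIV \<in> ran delta \<and>
     (\<exists>phi. partrec phi \<and> (\<forall>w r A. delta r = Some A \<longrightarrow>
        (\<exists>q. t2_computes phi (bpair (word_name w) r) q \<and> delta q = Some (rescale w A)))) \<and>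
     (\<exists>phi. partrec phi \<and> (\<forall>w r A. delta r = Some A \<longrightarrow>
        (\<exists>q. t2_computes phi (bpair (word_name w) r) q \<and> delta q = Some (unscale w A)))) \<and>
     (\<exists>phi. partrec phi \<and> (\<forall>ws r A. delta r = Some A \<longrightarrow>
        (\<exists>q. t2_computes phi (bpair (clopen_name ws) r) q \<and> delta q = Some (A \<inter> clopen_of ws))))"

definition closed_under_comb :: "(nat \<Rightarrow> bool) set rep \<Rightarrow> bool" where
  "closed_under_comb delta \<longleftrightarrow>
     (\<exists>phi. partrec phi \<and> (\<forall>rs As. (\<forall>n. delta (rs n) = Some (As n)) \<longrightarrow>
        (\<exists>q. t2_computes phi (btuple rs) q \<and>
             delta q = Some ({\<lambda>n. n \<noteq> 0} \<union>
                (\<Union>n. rescale (replicate n True @ [False]) (As n))))))"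

end

theory Submission
  imports Defs
begin

(* FindWS \<le>_W parallelization: ask the parallel problem for the constant sequence
   and read off the component 0 of its answer.
   parallelization \<le>_W FindWS: a sequence of games (d_i, A_i) is merged into one game.
   Player 1 opens with 0; player 2 then plays 1^n 0 with n \<ge> 1, selecting game n-1,
   and the rest of the play is a play of that game.  If player 2 plays 1 forever,
   player 1 wins.  The winning set is C (\<lambda>_. C (\<lambda>m. A_(m-1))), so it has a name computable
   from names of the A_i (applying the closure twice).  Winning strategies of the
   components combine into one for the merged game, and conversely every winning
   strategy for the merged game, restricted behind the prefix 0 1^(i+1) 0, wins game i. *)

section \<open>Total recursive functions\<close>

abbreviation enc :: "nat \<Rightarrow> nat \<Rightarrow> nat" where "enc a b \<equiv> prod_encode (a, b)"
abbreviation d1 :: "nat \<Rightarrow> nat" where "d1 n \<equiv> fst (prod_decode n)"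
abbreviation d2 :: "nat \<Rightarrow> nat" where "d2 n \<equiv> snd (prod_decode n)"

lemma partrec_eq: "partrec f \<Longrightarrow> (\<And>n. f n = g n) \<Longrightarrow> partrec g"
  by (metis ext)

text \<open>The closure properties below let the machines of later sections be written as ordinary
  HOL functions whose recursiveness is checked by repeated introduction rules.\<close>
definition trec :: "(nat \<Rightarrow> nat) \<Rightarrow> bool" where "trec f \<longleftrightarrow> partrec (\<lambda>n. Some (f n))"

lemma trec_const: "trec (\<lambda>_. c)"
  unfolding trec_def
proof (induction c)
  case 0 show ?case by (rule partrec.zero)
next
  case (Suc c)
  from partrec.comp[OF partrec.succ Suc] show ?case by simp
qed

lemma trec_id: "trec (\<lambda>n. n)"
  unfolding trec_def using partrec.pair[OF partrec.left partrec.right] by simp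

lemma trec_id': "trec id" using trec_id by (simp add: id_def)
lemma trec_d1: "trec d1" unfolding trec_def by (rule partrec.left)
lemma trec_d2: "trec d2" unfolding trec_def by (rule partrec.right)
lemma trec_Suc: "trec Suc" unfolding trec_def by (rule partrec.succ)

lemma trec_comp: "trec f \<Longrightarrow> trec g \<Longrightarrow> trec (\<lambda>n. f (g n))"
  unfolding trec_def using partrec.comp[of "\<lambda>n. Some (f n)" "\<lambda>n. Some (g n)"] by simp

lemma trec_pair: "trec f \<Longrightarrow> trec g \<Longrightarrow> trec (\<lambda>n. enc (f n) (g n))"
  unfolding trec_def using partrec.pair[of "\<lambda>n. Some (f n)" "\<lambda>n. Some (g n)"] by simp

lemma trec_d1': "trec a \<Longrightarrow> trec (\<lambda>n. d1 (a n))" using trec_comp[OF trec_d1] .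
lemma trec_d2': "trec a \<Longrightarrow> trec (\<lambda>n. d2 (a n))" using trec_comp[OF trec_d2] .
lemma trec_Suc': "trec a \<Longrightarrow> trec (\<lambda>n. Suc (a n))" using trec_comp[OF trec_Suc] .

lemma trec_rec:
  assumes "trec f" "trec g"
  shows "trec (\<lambda>p. rec_nat (f (d1 p)) (\<lambda>y i. g (enc (d1 p) (enc y i))) (d2 p))"
proof -
  have "partrec (\<lambda>p. case prod_decode p of (a, n) \<Rightarrow>
        rec_nat (Some (f a)) (\<lambda>y IH. Option.bind IH (\<lambda>i. Some (g (enc a (enc y i))))) n)"
    using partrec.prec[OF assms[unfolded trec_def]] .
  moreover have "rec_nat (Some (f a)) (\<lambda>y IH. Option.bind IH (\<lambda>i. Some (g (enc a (enc y i))))) n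
      = Some (rec_nat (f a) (\<lambda>y i. g (enc a (enc y i))) n)" for a n
    by (induction n) auto
  ultimately show ?thesis unfolding trec_def
    by (metis (no_types, lifting) ext case_prod_beta)
qed

lemma trec2: "trec (\<lambda>n. f (d1 n) (d2 n)) \<Longrightarrow> trec a \<Longrightarrow> trec b \<Longrightarrow> trec (\<lambda>n. f (a n) (b n))"
  using trec_comp[of "\<lambda>n. f (d1 n) (d2 n)" "\<lambda>n. enc (a n) (b n)"] trec_pair by simp

lemma trec_rec2:
  assumes "trec f" "trec (\<lambda>n. g (d1 n) (d1 (d2 n)) (d2 (d2 n)))" "trec a" "trec b"
  shows "trec (\<lambda>n. rec_nat (f (a n)) (\<lambda>y i. g (a n) y i) (b n))"
proof -
  have "trec (\<lambda>p. rec_nat (f (d1 p)) (\<lambda>y i. g (d1 p) y i) (d2 p))"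
    using trec_rec[OF assms(1,2)] by simp
  from trec2[of "\<lambda>x y. rec_nat (f x) (\<lambda>y' i. g x y' i) y", OF this assms(3,4)] show ?thesis .
qed

text \<open>Arithmetic: each operation is a primitive recursion of the previous one.\<close>
lemma trec_add: "trec (\<lambda>n. a n + b n)" if "trec a" "trec b"
proof -
  have "trec (\<lambda>n. rec_nat (id (a n)) (\<lambda>y i. (\<lambda>x y i. Suc i) (a n) y i) (b n))"
    by (rule trec_rec2; intro that trec_id' trec_comp[OF trec_Suc] trec_comp[OF trec_d2 trec_d2] trec_id)
  moreover have "rec_nat x (\<lambda>y i. Suc i) m = x + m" for x m by (induction m) auto
  ultimately show ?thesis by (simp add: id_def)
qed

lemma trec_mult: "trec (\<lambda>n. a n * b n)" if "trec a" "trec b"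
proof -
  have "trec (\<lambda>n. rec_nat ((\<lambda>_. 0) (a n)) (\<lambda>y i. (\<lambda>x y i. i + x) (a n) y i) (b n))"
    by (rule trec_rec2; intro that trec_add trec_d2' trec_d1' trec_id trec_const)
  moreover have "rec_nat 0 (\<lambda>y i. i + x) m = x * m" for x m by (induction m) auto
  ultimately show ?thesis by (simp add: mult.commute)
qed

lemma trec_pred: "trec (\<lambda>n. a n - 1)" if "trec a"
proof -
  have "trec (\<lambda>n. rec_nat ((\<lambda>_. 0) (a n)) (\<lambda>y i. (\<lambda>x y i. y) (a n) y i) (a n))"
    by (rule trec_rec2; intro that trec_add trec_d2' trec_d1' trec_id trec_const)
  moreover have "rec_nat 0 (\<lambda>y i. y) m = m - 1" for m by (induction m) auto
  ultimately show ?thesis by simp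
qed

lemma trec_sub: "trec (\<lambda>n. a n - b n)" if "trec a" "trec b"
proof -
  have "trec (\<lambda>n. rec_nat (id (a n)) (\<lambda>y i. (\<lambda>x y i. i - 1) (a n) y i) (b n))"
    by (rule trec_rec2; intro that trec_id' trec_pred trec_d2' trec_d1' trec_id trec_const)
  moreover have "rec_nat x (\<lambda>y i. i - 1) m = x - m" for x m by (induction m) auto
  ultimately show ?thesis by (simp add: id_def)
qed

text \<open>Case distinction by arithmetic: 1 - c is the indicator of c = 0.\<close>
lemma trec_if0: "trec (\<lambda>n. if c n = 0 then x n else y n)" if "trec c" "trec x" "trec y"
proof -
  have "trec (\<lambda>n. x n * (1 - c n) + y n * (1 - (1 - c n)))"
    by (intro trec_add trec_mult trec_sub that trec_const)
  moreover have "x n * (1 - c n) + y n * (1 - (1 - c n)) = (if c n = 0 then x n else y n)" for n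
    by (cases "c n") auto
  ultimately show ?thesis by simp
qed

lemma trec_if_eq: "trec (\<lambda>n. if a n = b n then x n else y n)" if "trec a" "trec b" "trec x" "trec y"
proof -
  have "trec (\<lambda>n. if (a n - b n) + (b n - a n) = 0 then x n else y n)"
    by (intro trec_if0 trec_add trec_sub that)
  moreover have "((a n - b n) + (b n - a n) = 0) = (a n = b n)" for n by auto
  ultimately show ?thesis by simp
qed

lemma trec_funpow: "trec (\<lambda>n. (f ^^ b n) (a n))" if "trec f" "trec a" "trec b"
proof -
  have "trec (\<lambda>n. rec_nat (id (a n)) (\<lambda>y i. (\<lambda>x y i. f i) (a n) y i) (b n))"
    by (rule trec_rec2; intro that trec_id' trec_comp[OF that(1)] trec_d2' trec_d1' trec_id trec_const)
  moreover have "rec_nat x (\<lambda>y i. f i) m = (f ^^ m) x" for x m by (induction m) auto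
  ultimately show ?thesis by (simp add: id_def)
qed

text \<open>Halving: iterate the step (q, r) \<mapsto> (q, r + 1) or (q + 1, 0) on (0, 0).\<close>
lemma trec_div2: "trec (\<lambda>n. a n div 2)" and trec_mod2: "trec (\<lambda>n. a n mod 2)" if "trec a"
proof -
  define st where "st = (\<lambda>s::nat. if d2 s = 1 then enc (Suc (d1 s)) 0 else enc (d1 s) 1)"
  have trec_st: "trec st" unfolding st_def
    by (intro trec_if_eq trec_pair trec_Suc' trec_d1' trec_d2' trec_id trec_const)
  have st_iter: "(st ^^ m) 0 = enc (m div 2) (m mod 2)" for m
  proof (induction m)
    case 0 then show ?case by (simp add: prod_encode_def)
  next
    case (Suc m)
    have e: "st (enc a b) = (if b = 1 then enc (Suc a) 0 else enc a 1)" for a b by (simp add: st_def)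
    have "(st ^^ Suc m) 0 = st (enc (m div 2) (m mod 2))" using Suc by simp
    also have "\<dots> = enc (Suc m div 2) (Suc m mod 2)"
      unfolding e by (cases "m mod 2 = 1") (simp_all, presburger+)
    finally show ?case .
  qed
  have "trec (\<lambda>n. (st ^^ a n) 0)" by (intro trec_funpow trec_st that trec_const)
  then have t: "trec (\<lambda>n. enc (a n div 2) (a n mod 2))" by (simp add: st_iter)
  show "trec (\<lambda>n. a n div 2)" using trec_d1'[OF t] by simp
  show "trec (\<lambda>n. a n mod 2)" using trec_d2'[OF t] by simp
qed

text \<open>Operations on list codes (list_encode) that act as the corresponding list operations;
  Type-2 machines read finite prefixes of their input as such codes.\<close>
definition ltl :: "nat \<Rightarrow> nat" where "ltl l = d2 (l - 1)"
definition lhd :: "nat \<Rightarrow> nat" where "lhd l = d1 (l - 1)"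
definition lnth :: "nat \<Rightarrow> nat \<Rightarrow> nat" where "lnth l j = lhd ((ltl ^^ j) l)"

lemma trec_ltl: "trec a \<Longrightarrow> trec (\<lambda>n. ltl (a n))" unfolding ltl_def by (intro trec_d2' trec_pred)
lemma trec_lhd: "trec a \<Longrightarrow> trec (\<lambda>n. lhd (a n))" unfolding lhd_def by (intro trec_d1' trec_pred)
lemma trec_ltls: "trec a \<Longrightarrow> trec b \<Longrightarrow> trec (\<lambda>n. (ltl ^^ b n) (a n))"
  by (intro trec_funpow trec_ltl trec_id)
lemma trec_lnth: "trec a \<Longrightarrow> trec b \<Longrightarrow> trec (\<lambda>n. lnth (a n) (b n))"
  unfolding lnth_def by (intro trec_lhd trec_ltls)

lemma ltl_code: "ltl (list_encode xs) = list_encode (tl xs)"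
proof -
  have "prod_decode 0 = (0,0)" by (simp add: prod_decode_def prod_decode_aux.simps)
  then show ?thesis by (cases xs) (auto simp: ltl_def)
qed

lemma ltls_code: "(ltl ^^ j) (list_encode xs) = list_encode (drop j xs)"
  by (induction j) (auto simp: ltl_code tl_drop drop_Suc)

lemma list_encode_eq_0: "list_encode xs = 0 \<longleftrightarrow> xs = []"
  by (cases xs) auto

lemma ltls_code_nonzero: "(ltl ^^ j) (list_encode xs) \<noteq> 0 \<longleftrightarrow> j < length xs"
  by (simp add: ltls_code list_encode_eq_0 not_le)

lemma lnth_code: "j < length xs \<Longrightarrow> lnth (list_encode xs) j = xs ! j"
  unfolding lnth_def ltls_code
  by (cases "drop j xs") (auto simp: lhd_def Cons_nth_drop_Suc[symmetric])

lemma trec_map_upt: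
  assumes "trec (\<lambda>m. F (d1 m) (d2 m))" "trec a" "trec b"
  shows "trec (\<lambda>n. list_encode (map (F (a n)) [0..<b n]))"
proof -
  define G where "G = (\<lambda>x y s. Suc (enc (F (d1 x) (d2 x - Suc y)) s))"
  have "trec (\<lambda>n. rec_nat ((\<lambda>_. 0) (enc (a n) (b n))) (\<lambda>y i. G (enc (a n) (b n)) y i) (b n))"
    by (rule trec_rec2, rule trec_const, unfold G_def,
        intro trec_Suc' trec_pair trec2[OF assms(1)] trec_d1' trec_d2' trec_sub trec_id,
        intro trec_pair assms, rule assms)
  moreover have "y \<le> k \<Longrightarrow> rec_nat 0 (\<lambda>y i. G (enc x k) y i) y = list_encode (map (F x) [k - y..<k])"
    for x k y
  proof (induction y)
    case 0 then show ?case by simp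
  next
    case (Suc y)
    then have "[k - Suc y..<k] = (k - Suc y) # [k - y..<k]"
      using upt_conv_Cons[of "k - Suc y" k] Suc.prems by (simp add: Suc_diff_Suc)
    with Suc show ?case by (simp add: G_def)
  qed
  ultimately show ?thesis by simp
qed

abbreviation prefix_code :: "baire \<Rightarrow> nat \<Rightarrow> nat" where
  "prefix_code p k \<equiv> list_encode (map p [0..<k])"

definition len_ge :: "nat \<Rightarrow> nat \<Rightarrow> nat" where
  "len_ge L k = (if k = 0 then 1 else (ltl ^^ (k - 1)) L)"

lemma trec_len_ge: "trec a \<Longrightarrow> trec b \<Longrightarrow> trec (\<lambda>n. len_ge (a n) (b n))"
  unfolding len_ge_def by (intro trec_if0 trec_const trec_ltls trec_pred)

lemma len_ge_code: "len_ge (list_encode xs) k = 0 \<longleftrightarrow> length xs < k"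
  unfolding len_ge_def using ltls_code_nonzero[of "k - 1" xs] by auto

definition ltake :: "nat \<Rightarrow> nat \<Rightarrow> nat" where
  "ltake L k = list_encode (map (lnth L) [0..<k])"

lemma trec_ltake: "trec a \<Longrightarrow> trec b \<Longrightarrow> trec (\<lambda>n. ltake (a n) (b n))"
  unfolding ltake_def by (intro trec_map_upt trec_lnth trec_d1 trec_d2)

lemma ltake_prefix_code: "k \<le> len \<Longrightarrow> ltake (prefix_code p len) k = prefix_code p k"
  unfolding ltake_def by (intro arg_cong[where f=list_encode] map_cong) (auto simp: lnth_code)

definition all_pos :: "nat \<Rightarrow> nat \<Rightarrow> nat" where
  "all_pos cs m = rec_nat 1 (\<lambda>y r. if lnth cs y = 0 then 0 else r) m"

lemma trec_all_pos: "trec (\<lambda>n. all_pos (a n) (b n))" if "trec a" "trec b"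
proof -
  have "trec (\<lambda>n. rec_nat ((\<lambda>_. 1) (a n)) (\<lambda>y r. (\<lambda>cs y r. if lnth cs y = 0 then 0 else r) (a n) y r) (b n))"
    by (rule trec_rec2; intro that trec_if0 trec_lnth trec_d1 trec_d2 trec_d1' trec_d2' trec_const trec_id)
  then show ?thesis by (simp add: all_pos_def)
qed

lemma all_pos_code: "m \<le> length cs \<Longrightarrow> all_pos (list_encode cs) m = 0 \<longleftrightarrow> (\<exists>j<m. cs ! j = 0)"
  unfolding all_pos_def by (induction m) (auto simp: lnth_code less_Suc_eq)

definition lpred_take :: "nat \<Rightarrow> nat \<Rightarrow> nat" where
  "lpred_take cs m = list_encode (map (\<lambda>j. lnth cs j - 1) [0..<m])"

lemma trec_lpred_take: "trec a \<Longrightarrow> trec b \<Longrightarrow> trec (\<lambda>n. lpred_take (a n) (b n))"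
  unfolding lpred_take_def by (intro trec_map_upt trec_pred trec_lnth trec_d1 trec_d2)

lemma pr_trec: "trec f \<Longrightarrow> partrec (\<lambda>n. Some (f n))" by (simp add: trec_def)

lemma pr_comp_trec: "partrec P \<Longrightarrow> trec h \<Longrightarrow> partrec (\<lambda>n. P (h n))"
  unfolding trec_def using partrec.comp[of P "\<lambda>n. Some (h n)"] by simp

lemma pr_bind: "partrec P \<Longrightarrow> partrec F \<Longrightarrow> partrec (\<lambda>n. Option.bind (P n) (\<lambda>r. F (enc n r)))"
proof -
  assume P: "partrec P" and F: "partrec F"
  have "partrec (\<lambda>n. Option.bind (Some n) (\<lambda>a. Option.bind (P n) (\<lambda>b. Some (enc a b))))"
    using partrec.pair[OF trec_id[unfolded trec_def] P] .
  from partrec.comp[OF F this] show ?thesis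
    by (rule partrec_eq) (simp add: bind_assoc)
qed

lemma pr_map: "trec f \<Longrightarrow> partrec P \<Longrightarrow> partrec (\<lambda>n. map_option f (P n))"
proof -
  assume f: "trec f" and P: "partrec P"
  from partrec.comp[OF f[unfolded trec_def] P] show ?thesis
    by (rule partrec_eq) (simp add: map_conv_bind_option comp_def)
qed

text \<open>Definition by cases; the untaken branch may be undefined.  The guarded form is
  obtained by primitive recursion up to the indicator of the condition.\<close>
lemma pr_guard: "trec c \<Longrightarrow> partrec B \<Longrightarrow> partrec (\<lambda>n. if c n = 0 then Some 0 else B n)"
proof -
  assume c: "trec c" and B: "partrec B"
  have "partrec (\<lambda>n. B (d1 n))" by (rule pr_comp_trec[OF B trec_d1])
  from partrec.prec[OF trec_const[unfolded trec_def] this]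
  have Q: "partrec (\<lambda>p. case prod_decode p of (a, n) \<Rightarrow>
        rec_nat (Some 0) (\<lambda>y IH. Option.bind IH (\<lambda>i. B a)) n)" by simp
  have h: "trec (\<lambda>n. enc n (if c n = 0 then 0 else 1))"
    by (intro trec_pair trec_id trec_if0 c trec_const)
  from pr_comp_trec[OF Q h] show ?thesis
    by (rule partrec_eq) auto
qed

text \<open>Both branches are guarded by the condition and shifted by one, so that the untaken one
  yields 0; the taken value is recovered from the sum of the two.\<close>
lemma pr_if: "trec c \<Longrightarrow> partrec A \<Longrightarrow> partrec B \<Longrightarrow> partrec (\<lambda>n. if c n = 0 then A n else B n)"
proof -
  assume c: "trec c" and A: "partrec A" and B: "partrec B"
  have A': "partrec (\<lambda>n. if (if c n = 0 then 1 else 0::nat) = 0 then Some 0 else map_option Suc (A n))"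
    by (rule pr_guard[OF trec_if0[OF c trec_const trec_const] pr_map[OF trec_Suc A]])
  have B': "partrec (\<lambda>n. if c n = 0 then Some 0 else map_option Suc (B n))"
    by (intro pr_guard pr_map trec_Suc c B)
  have "partrec (\<lambda>n. map_option (\<lambda>m. d1 m + d2 m - 1)
     (Option.bind (if (if c n = 0 then 1 else 0::nat) = 0 then Some 0 else map_option Suc (A n))
       (\<lambda>a. Option.bind (if c n = 0 then Some 0 else map_option Suc (B n)) (\<lambda>b. Some (enc a b)))))"
    by (intro pr_map partrec.pair A' B' trec_pred trec_add trec_d1 trec_d2)
  then show ?thesis
  proof (rule partrec_eq)
    fix n show "map_option (\<lambda>m. d1 m + d2 m - 1)
     (Option.bind (if (if c n = 0 then 1 else 0::nat) = 0 then Some 0 else map_option Suc (A n))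
       (\<lambda>a. Option.bind (if c n = 0 then Some 0 else map_option Suc (B n)) (\<lambda>b. Some (enc a b))))
      = (if c n = 0 then A n else B n)"
      by (cases "c n = 0"; cases "A n"; cases "B n"; simp)
  qed
qed

lemma rfind_optI:
  assumes "\<And>m. m < n \<Longrightarrow> \<exists>k. f m = Some (Suc k)" "f n = Some 0"
  shows "rfind_opt f = Some n"
proof -
  let ?P = "\<lambda>n. f n = Some 0 \<and> (\<forall>m<n. \<exists>k. f m = Some (Suc k))"
  have Pn: "?P n" using assms by auto
  have "(LEAST n. ?P n) = n"
  proof (rule Least_equality)
    show "?P n" by (rule Pn)
    fix y assume "?P y"
    show "n \<le> y"
    proof (rule ccontr)
      assume "\<not> n \<le> y"
      then have "y < n" by simp
      with assms(1) \<open>?P y\<close> show False by fastforce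
    qed
  qed
  with Pn show ?thesis unfolding rfind_opt_def Let_def by auto
qed

text \<open>Collecting the first k values of a partial recursive function into a list code, by a
  primitive recursion that builds [v (k - y), ..., v (k - 1)] for y = 0, ..., k, prepending one
  value per step (Suc (enc r l) is the code of r # l).\<close>
lemma pr_collect:
  assumes D: "partrec D"
  shows "\<exists>B. partrec B \<and> (\<forall>x k v. (\<forall>j<k. D (enc x j) = Some (v j)) \<longrightarrow>
            B (enc x k) = Some (list_encode (map v [0..<k])))"
proof -
  define t where "t = (\<lambda>z. enc (d1 (d1 z)) (d2 (d1 z) - Suc (d1 (d2 z))))"
  have tt: "trec t" unfolding t_def by (intro trec_pair trec_d1' trec_d2' trec_sub trec_Suc' trec_id)
  define g where "g = (\<lambda>z. Option.bind (D (t z)) (\<lambda>r. Some (Suc (enc (d2 (enc z r)) (d2 (d2 (d1 (enc z r))))))))"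
  have pg: "partrec g" unfolding g_def
    by (intro pr_bind pr_comp_trec[OF D tt] pr_trec trec_Suc' trec_pair trec_d1' trec_d2' trec_id)
  from partrec.prec[OF trec_const[unfolded trec_def] pg]
  have Q: "partrec (\<lambda>p. case prod_decode p of (a, n) \<Rightarrow>
        rec_nat (Some 0) (\<lambda>y IH. Option.bind IH (\<lambda>i. g (enc a (enc y i)))) n)" by simp
  have h: "trec (\<lambda>m. enc m (d2 m))" by (intro trec_pair trec_id trec_d2)
  define B where "B = (\<lambda>m. case prod_decode (enc m (d2 m)) of (a, n) \<Rightarrow>
        rec_nat (Some 0) (\<lambda>y IH. Option.bind IH (\<lambda>i. g (enc a (enc y i)))) n)"
  have pB: "partrec B" using pr_comp_trec[OF Q h] unfolding B_def .
  have main: "(\<forall>j<k. D (enc x j) = Some (v j)) \<Longrightarrow> y \<le> k \<Longrightarrow>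
     rec_nat (Some 0) (\<lambda>y IH. Option.bind IH (\<lambda>i. g (enc (enc x k) (enc y i)))) y
       = Some (list_encode (map v [k - y..<k]))" for x k v y
  proof (induction y)
    case 0 then show ?case by simp
  next
    case (Suc y)
    then have u: "[k - Suc y..<k] = (k - Suc y) # [k - y..<k]"
      using upt_conv_Cons[of "k - Suc y" k] by (simp add: Suc_diff_Suc)
    have "D (enc x (k - Suc y)) = Some (v (k - Suc y))" using Suc.prems by auto
    with Suc show ?case by (simp add: u g_def t_def)
  qed
  have "B (enc x k) = Some (list_encode (map v [0..<k]))" if "\<forall>j<k. D (enc x j) = Some (v j)" for x k v
    using main[OF that order_refl] by (simp add: B_def)
  with pB show ?thesis by blast
qed

section \<open>Type-2 machines\<close>

text \<open>A machine whose n-th output digit depends only on the input digit at position sigma n: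
  it waits until the input prefix is long enough and then answers.\<close>
lemma digit_machine:
  assumes s: "trec \<sigma>" and F: "trec F"
  shows "\<exists>M. partrec M \<and> (\<forall>p. t2_computes M p (\<lambda>n. F (enc n (p (\<sigma> n)))))"
proof -
  define M' where "M' = (\<lambda>x. if (ltl ^^ \<sigma> (d2 x)) (d1 x) = 0 then 0
       else Suc (F (enc (d2 x) (lnth (d1 x) (\<sigma> (d2 x))))))"
  have "trec M'" unfolding M'_def
    by (intro trec_if0 trec_ltls trec_Suc' trec_comp[OF F] trec_pair trec_lnth trec_comp[OF s] trec_d1 trec_d2 trec_const)
  then have pM: "partrec (\<lambda>x. Some (M' x))" by (rule pr_trec)
  have "t2_out (\<lambda>x. Some (M' x)) p n (F (enc n (p (\<sigma> n))))" for p n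
    unfolding t2_out_def
  proof (intro exI conjI allI impI)
    show "Some (M' (enc (list_encode (map p [0..<Suc (\<sigma> n)])) n)) = Some (Suc (F (enc n (p (\<sigma> n)))))"
      unfolding M'_def using ltls_code_nonzero[of "\<sigma> n" "map p [0..<Suc (\<sigma> n)]"]
        lnth_code[of "\<sigma> n" "map p [0..<Suc (\<sigma> n)]"]
      by (simp del: upt_Suc)
    fix j assume "j < Suc (\<sigma> n)"
    then show "Some (M' (enc (list_encode (map p [0..<j])) n)) = Some 0"
      unfolding M'_def using ltls_code_nonzero[of "\<sigma> n" "map p [0..<j]"] by simp
  qed
  with pM show ?thesis unfolding t2_computes_def by blast
qed

lemma bpair_machine:
  assumes "partrec Ma" "partrec Mb"
  shows "\<exists>M. partrec M \<and> (\<forall>p qa qb. t2_computes Ma p qa \<longrightarrow> t2_computes Mb p qb \<longrightarrow>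
            t2_computes M p (bpair qa qb))"
proof -
  define M where "M = (\<lambda>x. if d2 x mod 2 = 0 then Ma (enc (d1 x) (d2 x div 2)) else Mb (enc (d1 x) (d2 x div 2)))"
  have pM: "partrec M" unfolding M_def
    by (intro pr_if trec_mod2 trec_d2 pr_comp_trec[OF assms(1)] pr_comp_trec[OF assms(2)] trec_pair trec_d1 trec_div2)
  have "t2_computes M p (bpair qa qb)" if "t2_computes Ma p qa" "t2_computes Mb p qb" for p qa qb
    unfolding t2_computes_def
  proof
    fix n
    show "t2_out M p n (bpair qa qb n)"
    proof (cases "even n")
      case True
      with that(1) have "t2_out Ma p (n div 2) (qa (n div 2))" unfolding t2_computes_def by blast
      with True show ?thesis unfolding t2_out_def M_def bpair_def by simp
    next
      case False
      with that(2) have "t2_out Mb p (n div 2) (qb (n div 2))" unfolding t2_computes_def by blast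
      have "n mod 2 \<noteq> 0" using False by presburger
      with False \<open>t2_out Mb p (n div 2) (qb (n div 2))\<close> show ?thesis unfolding t2_out_def M_def bpair_def by simp
    qed
  qed
  with pM show ?thesis by blast
qed

lemma index_machine: "trec \<sigma> \<Longrightarrow> \<exists>M. partrec M \<and> (\<forall>p. t2_computes M p (\<lambda>n. p (\<sigma> n)))"
  using digit_machine[OF _ trec_d2, of \<sigma>] by simp

text \<open>Search for the first decisive step: S is run on (x, 0), (x, 1), ...; the value 1 means
  "continue", any other value s ends the search with the result s - 1.  Both the normal form
  of a machine and the composition of machines below are searches of this kind.\<close>
definition first_decision :: "(nat \<Rightarrow> nat option) \<Rightarrow> nat \<Rightarrow> nat option" where
  "first_decision S x = Option.bind (rfind_opt (\<lambda>m. map_option (\<lambda>s. if s = 1 then 1 else 0) (S (enc x m))))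
     (\<lambda>m. map_option (\<lambda>s. s - 1) (S (enc x m)))"

lemma partrec_first_decision:
  assumes "partrec S"
  shows "partrec (first_decision S)"
proof -
  have "partrec (\<lambda>z. map_option (\<lambda>s. if s = 1 then 1 else 0) (S z))"
    by (rule pr_map[OF _ assms]) (intro trec_if_eq trec_id trec_const)
  then have test: "partrec (\<lambda>x. rfind_opt (\<lambda>m. map_option (\<lambda>s. if s = 1 then 1 else 0) (S (enc x m))))"
    by (rule partrec.rfind)
  have result: "partrec (\<lambda>z. map_option (\<lambda>s. s - 1) (S z))"
    by (rule pr_map[OF _ assms]) (intro trec_pred trec_id)
  from pr_bind[OF test result] show ?thesis
    unfolding first_decision_def by (rule partrec_eq) simp
qed

lemma first_decision_eq:
  assumes "\<And>m. m < n \<Longrightarrow> S (enc x m) = Some 1" "S (enc x n) = Some s" "s \<noteq> 1"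
  shows "first_decision S x = Some (s - 1)"
proof -
  have "rfind_opt (\<lambda>m. map_option (\<lambda>s. if s = 1 then 1 else 0) (S (enc x m))) = Some n"
    by (rule rfind_optI) (use assms in auto)
  with assms(2) show ?thesis by (simp add: first_decision_def)
qed

lemma t2_out_threshold:
  assumes "\<And>len. M (enc (prefix_code p len) n) = Some (if A len then Suc v else 0)" "A l"
  shows "t2_out M p n v"
proof -
  define l0 where "l0 = (LEAST len. A len)"
  have "A l0" unfolding l0_def by (rule LeastI[of A, OF assms(2)])
  moreover have "\<not> A j" if "j < l0" for j using that unfolding l0_def by (rule not_less_Least)
  ultimately show ?thesis unfolding t2_out_def using assms(1) by (intro exI[of _ l0]) auto
qed

text \<open>Normal form of a machine M1: on an input prefix L and output index i, try the prefixes of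
  L of lengths 0, 1, ... until M1 answers; answer 0 if L is exhausted first.  Unlike M1, the
  normal form answers on every prefix, and its answers only change from 0 to the final one.\<close>
definition settle_step :: "(nat \<Rightarrow> nat option) \<Rightarrow> nat \<Rightarrow> nat option" where
  "settle_step M1 z = (if len_ge (d1 (d1 z)) (d2 z) = 0 then Some 0
     else map_option Suc (M1 (enc (ltake (d1 (d1 z)) (d2 z)) (d2 (d1 z)))))"

lemma partrec_settle_step: "partrec (settle_step M1)" if "partrec M1"
  unfolding settle_step_def
  by (intro pr_if trec_len_ge trec_d1' trec_d2' trec_id pr_trec trec_const pr_map trec_Suc
      pr_comp_trec[OF that] trec_pair trec_ltake)

lemma settle_value:
  assumes "t2_out M1 p i v"
  shows "\<exists>K. \<forall>len. first_decision (settle_step M1) (enc (prefix_code p len) i)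
                   = Some (if K \<le> len then Suc v else 0)"
proof -
  obtain K where K: "M1 (enc (prefix_code p K) i) = Some (Suc v)"
      "\<And>j. j < K \<Longrightarrow> M1 (enc (prefix_code p j) i) = Some 0"
    using assms unfolding t2_out_def by blast
  have step: "settle_step M1 (enc (enc (prefix_code p len) i) k)
      = (if len < k then Some 0 else map_option Suc (M1 (enc (prefix_code p k) i)))" for len k
    by (simp add: settle_step_def len_ge_code ltake_prefix_code del: upt_Suc)
  have "first_decision (settle_step M1) (enc (prefix_code p len) i) = Some (if K \<le> len then Suc v else 0)"
    for len
  proof (cases "K \<le> len")
    case True
    have "first_decision (settle_step M1) (enc (prefix_code p len) i) = Some (Suc (Suc v) - 1)"
      by (rule first_decision_eq[where n = K]) (use True K in \<open>auto simp: step\<close>)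
    then show ?thesis using True by simp
  next
    case False
    have "first_decision (settle_step M1) (enc (prefix_code p len) i) = Some (0 - 1)"
      by (rule first_decision_eq[where n = "Suc len"]) (use False K in \<open>auto simp: step\<close>)
    then show ?thesis using False by simp
  qed
  then show ?thesis by blast
qed

text \<open>One step of the composition of machines: from the input prefix L, collect the settled
  values of the first m output digits of the first machine (via B); if they are all settled,
  run the second machine M2 on them, otherwise answer 0 (undecided).\<close>
definition comp_step :: "(nat \<Rightarrow> nat option) \<Rightarrow> (nat \<Rightarrow> nat option) \<Rightarrow> nat \<Rightarrow> nat option" where
  "comp_step B M2 z = Option.bind (B (enc (d1 (d1 z)) (d2 z)))
     (\<lambda>cs. if all_pos cs (d2 z) = 0 then Some 0
           else map_option Suc (M2 (enc (lpred_take cs (d2 z)) (d2 (d1 z)))))"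

lemma partrec_comp_step:
  assumes B: "partrec B" and M2: "partrec M2"
  shows "partrec (comp_step B M2)"
proof -
  have "partrec (\<lambda>z. B (enc (d1 (d1 z)) (d2 z)))"
    by (intro pr_comp_trec[OF B] trec_pair trec_d1' trec_d2' trec_id)
  moreover have "partrec (\<lambda>w. if all_pos (d2 w) (d2 (d1 w)) = 0 then Some 0
      else map_option Suc (M2 (enc (lpred_take (d2 w) (d2 (d1 w))) (d2 (d1 (d1 w))))))"
    by (intro pr_if trec_all_pos trec_d1' trec_d2' trec_id pr_trec trec_const pr_map trec_Suc
        pr_comp_trec[OF M2] trec_pair trec_lpred_take)
  ultimately have "partrec (\<lambda>z. Option.bind (B (enc (d1 (d1 z)) (d2 z))) (\<lambda>cs.
      if all_pos (d2 (enc z cs)) (d2 (d1 (enc z cs))) = 0 then Some 0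
      else map_option Suc (M2 (enc (lpred_take (d2 (enc z cs)) (d2 (d1 (enc z cs)))) (d2 (d1 (d1 (enc z cs))))))))"
    by (rule pr_bind)
  then show ?thesis unfolding comp_step_def by (rule partrec_eq) (simp cong: if_cong)
qed

text \<open>The composed machine answers digit n of the final output once the input prefix is long
  enough for all digits of the intermediate output read by M2 to have settled.\<close>
lemma comp_value:
  assumes B: "\<And>x k v. (\<forall>j<k. V (enc x j) = Some (v j)) \<Longrightarrow> B (enc x k) = Some (list_encode (map v [0..<k]))"
    and V: "\<And>j len. V (enc (prefix_code p len) j) = Some (if Kf j \<le> len then Suc (q j) else 0)"
    and K: "N (enc (prefix_code q K) n) = Some (Suc v)"
      "\<And>j. j < K \<Longrightarrow> N (enc (prefix_code q j) n) = Some 0"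
  shows "first_decision (comp_step B N) (enc (prefix_code p len) n)
           = Some (if \<forall>j<K. Kf j \<le> len then Suc v else 0)"
proof -
  let ?settled = "\<lambda>m. \<forall>j<m. Kf j \<le> len"
  define code where "code = (\<lambda>j. if Kf j \<le> len then Suc (q j) else 0)"
  have collected: "B (enc (prefix_code p len) m) = Some (list_encode (map code [0..<m]))" for m
    by (rule B) (simp add: V code_def)
  have "lpred_take (list_encode (map code [0..<m])) m = prefix_code q m" if "?settled m" for m
    unfolding lpred_take_def using that
    by (intro arg_cong[where f=list_encode] map_cong) (auto simp: lnth_code code_def)
  then have step: "comp_step B N (enc (enc (prefix_code p len) n) m)
      = (if ?settled m then map_option Suc (N (enc (prefix_code q m) n)) else Some 0)" for m
    by (auto simp: comp_step_def collected all_pos_code code_def)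
  show ?thesis
  proof (cases "?settled K")
    case True
    have "first_decision (comp_step B N) (enc (prefix_code p len) n) = Some (Suc (Suc v) - 1)"
      by (rule first_decision_eq[where n = K]) (use True K in \<open>auto simp: step\<close>)
    then show ?thesis using True by simp
  next
    case False
    define m1 where "m1 = (LEAST m. \<not> ?settled m)"
    have "\<not> ?settled m1" unfolding m1_def by (rule LeastI[of _ K]) (use False in auto)
    moreover have "m1 \<le> K" unfolding m1_def by (rule Least_le) (use False in auto)
    moreover have "?settled m" if "m < m1" for m
      using not_less_Least[OF that[unfolded m1_def]] by blast
    ultimately have "first_decision (comp_step B N) (enc (prefix_code p len) n) = Some (0 - 1)"
      using K by (intro first_decision_eq[where n = m1]) (auto simp: step)
    then show ?thesis using False by simp
  qed
qed

lemma compose: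
  assumes M1: "partrec M1" and M2: "partrec M2"
  shows "\<exists>M. partrec M \<and> (\<forall>p q r. t2_computes M1 p q \<longrightarrow> t2_computes M2 q r \<longrightarrow> t2_computes M p r)"
proof -
  define V where "V = first_decision (settle_step M1)"
  have pV: "partrec V" unfolding V_def by (intro partrec_first_decision partrec_settle_step M1)
  obtain B where pB: "partrec B" and B: "\<And>x k v. (\<forall>j<k. V (enc x j) = Some (v j)) \<Longrightarrow>
      B (enc x k) = Some (list_encode (map v [0..<k]))"
    using pr_collect[OF pV] by blast
  define M where "M = first_decision (comp_step B M2)"
  have "t2_computes M p r" if q: "t2_computes M1 p q" and r: "t2_computes M2 q r" for p q r
    unfolding t2_computes_def
  proof
    fix n
    have "\<forall>i. \<exists>K. \<forall>len. V (enc (prefix_code p len) i) = Some (if K \<le> len then Suc (q i) else 0)"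
      using settle_value q unfolding V_def t2_computes_def by blast
    then obtain Kf where Kf: "\<And>i len. V (enc (prefix_code p len) i) = Some (if Kf i \<le> len then Suc (q i) else 0)"
      by metis
    obtain K2 where K2: "M2 (enc (prefix_code q K2) n) = Some (Suc (r n))"
        "\<And>j. j < K2 \<Longrightarrow> M2 (enc (prefix_code q j) n) = Some 0"
      using r unfolding t2_computes_def t2_out_def by blast
    have "\<forall>j<K2. Kf j \<le> (\<Sum>j<K2. Kf j)" by (simp add: member_le_sum)
    have "first_decision (comp_step B M2) (enc (prefix_code p len) n)
        = Some (if \<forall>j<K2. Kf j \<le> len then Suc (r n) else 0)" for len
      by (rule comp_value, (rule B; assumption), rule Kf, rule K2(1), rule K2(2))
    then show "t2_out M p n (r n)" unfolding M_def
      by (rule t2_out_threshold) fact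
  qed
  moreover have "partrec M" unfolding M_def by (intro partrec_first_decision partrec_comp_step pB M2)
  ultimately show ?thesis by blast
qed

lemma weihrauch_leI:
  assumes "partrec phiH" "partrec phiK"
    and "\<And>p x. dX p = Some x \<Longrightarrow> f x \<noteq> {} \<Longrightarrow>
      \<exists>h u. t2_computes phiH p h \<and> dU h = Some u \<and> g u \<noteq> {} \<and>
        (\<forall>q v. dV q = Some v \<longrightarrow> v \<in> g u \<longrightarrow>
           (\<exists>k y. t2_computes phiK (bpair p q) k \<and> dY k = Some y \<and> y \<in> f x))"
  shows "weihrauch_le dX dY f dU dV g"
  unfolding weihrauch_le_def
proof (rule exI[of _ phiK], rule exI[of _ phiH], intro conjI assms(1,2) allI impI)
  fix p x assume "dX p = Some x \<and> f x \<noteq> {}"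
  then obtain h u where h: "t2_computes phiH p h" "dU h = Some u" "g u \<noteq> {}" and
    sol: "\<And>q v. dV q = Some v \<Longrightarrow> v \<in> g u \<Longrightarrow>
           \<exists>k y. t2_computes phiK (bpair p q) k \<and> dY k = Some y \<and> y \<in> f x"
    using assms(3) by blast
  have "\<exists>k. t2_computes phiK (bpair p (G h)) k \<and> (\<exists>y. dY k = Some y \<and> y \<in> f x)"
    if R: "realizer dU dV g G" for G
  proof -
    obtain v where "dV (G h) = Some v" "v \<in> g u"
      using R h(2,3) unfolding realizer_def by blast
    then show ?thesis using sol by blast
  qed
  with h show "\<exists>h. t2_computes phiH p h \<and> (\<exists>u. dU h = Some u \<and> g u \<noteq> {}) \<and>
      (\<forall>G. realizer dU dV g G \<longrightarrow>
         (\<exists>k. t2_computes phiK (bpair p (G h)) k \<and> (\<exists>y. dY k = Some y \<and> y \<in> f x)))"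
    by blast
qed

section \<open>Plays and winning strategies\<close>

lemma hist_play: "hist t m = map (play t) [0..<m]"
  by (induction m) (auto simp: play_def)

lemma hist_take:
  assumes "\<forall>j<length v. t (take j v) = v ! j"
  shows "j \<le> length v \<Longrightarrow> hist t j = take j v"
proof (induction j)
  case 0 then show ?case by simp
next
  case (Suc j)
  then have "hist t (Suc j) = take j v @ [v ! j]" using assms by simp
  also have "\<dots> = take (Suc j) v" using Suc.prems by (simp add: take_Suc_conv_app_nth)
  finally show ?case .
qed

lemma play_prefix:
  assumes "\<forall>j<length v. t (take j v) = v ! j"
  shows "play t = prepend v (play (\<lambda>w. t (v @ w)))"
proof -
  have h: "hist t (length v + m) = v @ hist (\<lambda>w. t (v @ w)) m" for m
    by (induction m) (use hist_take[OF assms, of "length v"] in auto)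
  show ?thesis
  proof
    fix n
    show "play t n = prepend v (play (\<lambda>w. t (v @ w))) n"
    proof (cases "n < length v")
      case True
      then show ?thesis using hist_take[OF assms, of n] assms by (simp add: play_def prepend_def)
    next
      case False
      then have "n = length v + (n - length v)" by simp
      then have "hist t n = v @ hist (\<lambda>w. t (v @ w)) (n - length v)" using h by metis
      then show ?thesis using False by (simp add: play_def prepend_def)
    qed
  qed
qed

lemma play_starts_with:
  assumes "\<forall>j<length v. play t j = v ! j"
  shows "play t = prepend v (play (\<lambda>w. t (v @ w)))"
proof (rule play_prefix, intro allI impI)
  fix j assume j: "j < length v"
  have "take j v = hist t j"
    unfolding hist_play using j assms by (intro nth_equalityI) auto
  then show "t (take j v) = v ! j" using assms j by (simp add: play_def)
qed

text \<open>At most one player has a winning strategy: play the two strategies against each other.\<close>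
lemma not_both_winning: "winning d A P1 s1 \<Longrightarrow> winning d A P2 s2 \<Longrightarrow> False"
proof -
  assume a: "winning d A P1 s1" "winning d A P2 s2"
  define t where "t = (\<lambda>w. if d w = P1 then s1 w else s2 w)"
  have "play t \<in> A" using a(1) unfolding winning_def t_def by auto
  moreover have "play t \<notin> A" using a(2) unfolding winning_def t_def by auto
  ultimately show False by simp
qed

lemma prepend_eq: "prepend w a = x \<longleftrightarrow> (\<forall>i<length w. x i = w ! i) \<and> a = (\<lambda>n. x (n + length w))"
proof
  assume "prepend w a = x"
  then show "(\<forall>i<length w. x i = w ! i) \<and> a = (\<lambda>n. x (n + length w))"
    by (auto simp: prepend_def)
next
  assume a: "(\<forall>i<length w. x i = w ! i) \<and> a = (\<lambda>n. x (n + length w))"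
  show "prepend w a = x"
  proof
    fix n show "prepend w a n = x n" using a by (cases "n < length w") (auto simp: prepend_def)
  qed
qed

lemma mem_rescale: "x \<in> rescale w A \<longleftrightarrow> (\<forall>i<length w. x i = w ! i) \<and> (\<lambda>n. x (n + length w)) \<in> A"
proof -
  have "x \<in> rescale w A \<longleftrightarrow> (\<exists>a. a \<in> A \<and> prepend w a = x)" unfolding rescale_def by auto
  also have "\<dots> \<longleftrightarrow> (\<forall>i<length w. x i = w ! i) \<and> (\<lambda>n. x (n + length w)) \<in> A"
    unfolding prepend_eq by auto
  finally show ?thesis .
qed

lemma prepend_append: "prepend (u @ v) y = prepend u (prepend v y)"
  by (rule ext) (auto simp: prepend_def nth_append)

definition comb :: "(nat \<Rightarrow> (nat \<Rightarrow> bool) set) \<Rightarrow> (nat \<Rightarrow> bool) set" where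
  "comb As = {\<lambda>n. n \<noteq> 0} \<union> (\<Union>n. rescale (replicate n True @ [False]) (As n))"

lemma nth_ones_zero: "i < Suc n \<Longrightarrow> (replicate n True @ [False]) ! i = (i < n)"
  by (auto simp: nth_append less_Suc_eq)

lemma mem_comb: "x \<in> comb As \<longleftrightarrow> x = (\<lambda>n. n \<noteq> 0) \<or>
    (\<exists>n. (\<forall>i<n. x i) \<and> \<not> x n \<and> (\<lambda>m. x (m + Suc n)) \<in> As n)"
proof -
  have "x \<in> rescale (replicate n True @ [False]) (As n) \<longleftrightarrow>
        (\<forall>i<n. x i) \<and> \<not> x n \<and> (\<lambda>m. x (m + Suc n)) \<in> As n" for n
    unfolding mem_rescale using nth_ones_zero[of _ n] by (auto simp: less_Suc_eq)
  then show ?thesis unfolding comb_def by blast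
qed

lemma all_ones_notin_comb: "(\<lambda>_. True) \<notin> comb As"
  unfolding mem_comb by (auto dest: fun_cong[where x=0])

lemma zero_ones_in_comb: "(\<lambda>n. n \<noteq> 0) \<in> comb As"
  unfolding comb_def by blast

lemma comb_in: "y \<in> As n \<Longrightarrow> prepend (replicate n True @ [False]) y \<in> comb As"
  unfolding comb_def rescale_def by blast

lemma comb_out:
  assumes "n \<ge> 1" "prepend (replicate n True @ [False]) y \<in> comb As"
  shows "y \<in> As n"
proof -
  let ?x = "prepend (replicate n True @ [False]) y"
  have xi: "?x i = (if i < Suc n then i < n else y (i - Suc n))" for i
    by (auto simp: prepend_def nth_ones_zero)
  have "?x \<noteq> (\<lambda>n. n \<noteq> 0)"
    using fun_cong[of ?x "\<lambda>n. n \<noteq> 0" 0] xi[of 0] assms(1) by auto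
  then obtain m where m: "\<forall>i<m. ?x i" "\<not> ?x m" "(\<lambda>k. ?x (k + Suc m)) \<in> As m"
    using assms(2) unfolding mem_comb by blast
  have "m = n"
  proof (rule ccontr)
    assume "m \<noteq> n"
    then consider "m < n" | "n < m" by linarith
    then show False using m(1,2) xi[of m] xi[of n] by cases auto
  qed
  moreover have "(\<lambda>k. ?x (k + Suc n)) = y" using xi by auto
  ultimately show ?thesis using m(3) by simp
qed

text \<open>Winning set of the merged game: 0 1^n 0 followed by a play in A_(n-1), or 0 1^w.
  The doubled comb provides both the opening move 0 and the infinite play of ones.\<close>
definition merged_set :: "(nat \<Rightarrow> (nat \<Rightarrow> bool) set) \<Rightarrow> (nat \<Rightarrow> bool) set" where
  "merged_set As = comb (\<lambda>_. comb (\<lambda>m. As (m - 1)))"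

lemma zero_ones_in_merged_set: "(\<lambda>n. n \<noteq> 0) \<in> merged_set As"
  unfolding merged_set_def by (rule zero_ones_in_comb)

lemma all_ones_notin_merged_set: "(\<lambda>_. True) \<notin> merged_set As"
  unfolding merged_set_def by (rule all_ones_notin_comb)

lemma merged_set_in:
  assumes "y \<in> As (n - 1)"
  shows "prepend (False # replicate n True @ [False]) y \<in> merged_set As"
proof -
  have "prepend (replicate 0 True @ [False]) (prepend (replicate n True @ [False]) y)
      \<in> comb (\<lambda>_. comb (\<lambda>m. As (m - 1)))"
    by (intro comb_in[where As="\<lambda>_. comb (\<lambda>m. As (m - 1))"] comb_in[where As="\<lambda>m. As (m - 1)"] assms)
  then show ?thesis
    using prepend_append[of "[False]" "replicate n True @ [False]" y] by (simp add: merged_set_def)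
qed

lemma merged_set_out:
  assumes "prepend (False # replicate (Suc i) True @ [False]) y \<in> merged_set As"
  shows "y \<in> As i"
proof -
  let ?x = "prepend (False # replicate (Suc i) True @ [False]) y"
  have "\<not> ?x (Suc (Suc i))" by (simp add: prepend_def nth_append)
  then have "?x \<noteq> (\<lambda>n. n \<noteq> 0)" by auto
  then obtain m where m: "\<forall>i<m. ?x i" "\<not> ?x m" "(\<lambda>k. ?x (k + Suc m)) \<in> comb (\<lambda>m. As (m - 1))"
    using assms unfolding mem_comb merged_set_def by blast
  have "m = 0" using m(1) by (cases m) (auto simp: prepend_def)
  moreover have "(\<lambda>k. ?x (k + 1)) = prepend (replicate (Suc i) True @ [False]) y"
    by (auto simp: prepend_def nth_append)
  ultimately have "prepend (replicate (Suc i) True @ [False]) y \<in> comb (\<lambda>m. As (m - 1))"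
    using m(3) by (simp only: One_nat_def)
  from comb_out[OF _ this] have "y \<in> As (Suc i - 1)" by simp
  then show ?thesis by simp
qed

section \<open>The merged game\<close>

text \<open>Turn function of the merged game: player 1 chooses the first move, player 2 then chooses
  a block 1^n 0, and after the word 0 1^n 0 the game d_(n-1) is played.\<close>
definition merged_turn :: "(nat \<Rightarrow> bool list \<Rightarrow> player) \<Rightarrow> bool list \<Rightarrow> player" where
  "merged_turn ds w = (case w of [] \<Rightarrow> P1 | True # _ \<Rightarrow> P2 | False # u \<Rightarrow>
     (case dropWhile id u of [] \<Rightarrow> P2 | _ # w' \<Rightarrow> ds (length (takeWhile id u) - 1) w'))"

text \<open>Strategy of player 1 in the merged game built from strategies ss_i of the components:
  open with 0 and, after 0 1^n 0, follow ss_(n-1).\<close>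
definition merged_strategy :: "(nat \<Rightarrow> profile) \<Rightarrow> profile" where
  "merged_strategy ss w = (case w of False # u \<Rightarrow>
     (case dropWhile id u of [] \<Rightarrow> False | _ # w' \<Rightarrow> ss (length (takeWhile id u) - 1) w') | _ \<Rightarrow> False)"

lemma takeWhile_ones: "takeWhile id (replicate n True @ False # w) = replicate n True"
  by (induction n) auto

lemma dropWhile_ones: "dropWhile id (replicate n True @ False # w) = False # w"
  by (induction n) auto

lemma merged_turn_simps:
  "merged_turn ds [] = P1"
  "merged_turn ds (True # w) = P2"
  "merged_turn ds (False # replicate n True) = P2"
  "merged_turn ds (False # replicate n True @ False # w) = ds (n - 1) w"
  by (simp_all add: merged_turn_def takeWhile_ones dropWhile_ones dropWhile_replicate)

lemma merged_strategy_simps: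
  "merged_strategy ss [] = False"
  "merged_strategy ss (False # replicate n True @ False # w) = ss (n - 1) w"
  by (simp_all add: merged_strategy_def takeWhile_ones dropWhile_ones)

text \<open>Merging winning strategies of all components yields a winning strategy: a play either
  stays in 0 1^w, or passes 0 1^n 0 and is then a play of game n-1 against ss_(n-1).\<close>
lemma merged_strategy_wins:
  assumes ws: "\<And>i. winning (ds i) (As i) P1 (ss i)"
  shows "winning (merged_turn ds) (merged_set As) P1 (merged_strategy ss)"
  unfolding winning_def
proof (intro allI impI)
  fix t assume agree: "\<forall>w. merged_turn ds w = P1 \<longrightarrow> t w = merged_strategy ss w"
  let ?y = "play t"
  have y0: "\<not> ?y 0" using agree by (simp add: play_def merged_turn_simps merged_strategy_simps)
  show "(play t \<in> merged_set As) = (P1 = P1)"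
  proof (cases "\<forall>j. ?y (Suc j)")
    case True
    have "?y = (\<lambda>n. n \<noteq> 0)"
    proof
      fix n show "?y n = (n \<noteq> 0)" using True y0 by (cases n) auto
    qed
    then show ?thesis using zero_ones_in_merged_set by simp
  next
    case False
    define n where "n = (LEAST j. \<not> ?y (Suc j))"
    have yn: "\<not> ?y (Suc n)" unfolding n_def by (rule LeastI_ex) (use False in blast)
    have ones: "j < n \<Longrightarrow> ?y (Suc j)" for j unfolding n_def using not_less_Least by blast
    define v where "v = False # replicate n True @ [False]"
    have "\<forall>j<length v. ?y j = v ! j"
    proof (intro allI impI)
      fix j assume "j < length v"
      then consider "j = 0" | k where "j = Suc k" "k < n" | "j = Suc n"
        by (cases j) (auto simp: v_def less_Suc_eq)
      then show "?y j = v ! j" by cases (auto simp: v_def nth_append y0 ones yn)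
    qed
    then have play_t: "?y = prepend v (play (\<lambda>w. t (v @ w)))" by (rule play_starts_with)
    have "\<forall>w. ds (n - 1) w = P1 \<longrightarrow> t (v @ w) = ss (n - 1) w"
      using agree by (simp add: v_def merged_turn_simps merged_strategy_simps)
    moreover have "(\<forall>w. ds (n - 1) w = P1 \<longrightarrow> t (v @ w) = ss (n - 1) w) \<longrightarrow>
        (play (\<lambda>w. t (v @ w)) \<in> As (n - 1) \<longleftrightarrow> P1 = P1)"
      using ws[of "n - 1"] unfolding winning_def by (rule spec)
    ultimately have "play (\<lambda>w. t (v @ w)) \<in> As (n - 1)" by simp
    then show ?thesis unfolding play_t v_def using merged_set_in by simp
  qed
qed

text \<open>A winning strategy of the merged game opens with 0, since the play 1^w is lost.\<close>
lemma merged_winning_opens_with_0: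
  assumes "winning (merged_turn ds) (merged_set As) P1 s"
  shows "\<not> s []"
proof
  assume s: "s []"
  define t where "t = (\<lambda>w. if merged_turn ds w = P1 then s w else True)"
  have "hist t j = replicate j True" for j
  proof (induction j)
    case 0 then show ?case by simp
  next
    case (Suc j)
    have "t (replicate j True)" using s by (cases j) (auto simp: t_def merged_turn_simps)
    with Suc show ?case by (simp add: replicate_append_same)
  qed
  then have "play t = (\<lambda>_. True)"
    using s by (auto simp: play_def fun_eq_iff) (case_tac x; simp add: t_def merged_turn_simps)
  moreover have "play t \<in> merged_set As" using assms unfolding winning_def t_def by auto
  ultimately show False using all_ones_notin_merged_set by metis
qed

text \<open>Conversely, a winning strategy s of the merged game, restricted to the positions after
  0 1^(i+1) 0, wins game i: any play of game i is the tail of a play consistent with s, in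
  which player 2 selected game i.\<close>
lemma component_strategy_wins:
  assumes ws: "winning (merged_turn ds) (merged_set As) P1 s"
  shows "winning (ds i) (As i) P1 (\<lambda>w. s (False # replicate (Suc i) True @ False # w))"
  unfolding winning_def
proof (intro allI impI)
  fix t assume agree: "\<forall>w. ds i w = P1 \<longrightarrow> t w = s (False # replicate (Suc i) True @ False # w)"
  define v where "v = False # replicate (Suc i) True @ [False]"
  have vw: "v @ w = False # replicate (Suc i) True @ False # w" for w by (simp add: v_def)
  define t' where "t' = (\<lambda>u. if (\<exists>w. u = v @ w) then t (drop (length v) u)
      else if (\<exists>j<length v. u = take j v) then v ! length u else s u)"
  have agree': "t' u = s u" if P: "merged_turn ds u = P1" for u
  proof (cases "\<exists>w. u = v @ w")
    case True
    then obtain w where u: "u = v @ w" by blast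
    have "ds i w = P1" using P unfolding u vw merged_turn_simps by simp
    then show ?thesis using agree u vw by (simp add: t'_def)
  next
    case not_after: False
    show ?thesis
    proof (cases "\<exists>j<length v. u = take j v")
      case True
      then obtain j where j: "j < length v" "u = take j v" by blast
      show ?thesis
      proof (cases j)
        case 0 then show ?thesis using j not_after merged_winning_opens_with_0[OF ws]
          by (auto simp: t'_def v_def)
      next
        case (Suc k)
        then have "k \<le> Suc i" using j(1) by (simp add: v_def)
        then have "take k (replicate (Suc i) True @ [False]) = replicate k True"
          by (simp only: take_append) (simp del: replicate_Suc add: take_replicate min_def)
        then have "u = False # replicate k True" using j(2) Suc
          by (simp add: v_def del: replicate_Suc)
        then show ?thesis using P merged_turn_simps(3) by simp
      qed
    next
      case False
      then show ?thesis using not_after by (auto simp: t'_def)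
    qed
  qed
  have "\<forall>j<length v. t' (take j v) = v ! j"
  proof (intro allI impI)
    fix j assume j: "j < length v"
    have "\<nexists>w. take j v = v @ w"
    proof
      assume "\<exists>w. take j v = v @ w"
      then obtain w where "take j v = v @ w" by blast
      then have "length (take j v) = length v + length w" by simp
      with j show False by simp
    qed
    then show "t' (take j v) = v ! j" using j by (auto simp: t'_def)
  qed
  then have "play t' = prepend v (play (\<lambda>w. t' (v @ w)))" by (rule play_prefix)
  moreover have "(\<lambda>w. t' (v @ w)) = t" by (auto simp: t'_def)
  moreover have "play t' \<in> merged_set As" using ws agree' unfolding winning_def by blast
  ultimately show "(play t \<in> As i) = (P1 = P1)" using merged_set_out unfolding v_def by simp
qed

definition seq_turns :: "baire \<Rightarrow> nat \<Rightarrow> bool list \<Rightarrow> player" where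
  "seq_turns p i w = (if p (enc i (2 * bl_code w)) = 0 then P1 else P2)"

lemma bl_code_ones: "bl_code (replicate k True @ xs) = ((\<lambda>x. 2 * x + 2) ^^ k) (bl_code xs)"
  by (induction k) auto

lemma length_le_bl_code: "length w \<le> bl_code w"
  by (induction w) auto

lemma ones_word_cases:
  obtains n where "u = replicate n True" | n w where "u = replicate n True @ False # w"
proof -
  have "(\<exists>n. u = replicate n True) \<or> (\<exists>n w. u = replicate n True @ False # w)"
  proof (induction u)
    case Nil show ?case by (intro disjI1 exI[of _ 0]) simp
  next
    case (Cons b u)
    show ?case
    proof (cases b)
      case True
      from Cons.IH show ?thesis
      proof (elim disjE exE)
        fix n assume "u = replicate n True"
        then show ?thesis using True by (intro disjI1 exI[of _ "Suc n"]) simp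
      next
        fix n w assume "u = replicate n True @ False # w"
        then show ?thesis using True by (intro disjI2 exI[of _ "Suc n"] exI[of _ w]) simp
      qed
    next
      case False then show ?thesis by (intro disjI2 exI[of _ 0] exI[of _ u]) simp
    qed
  qed
  then show ?thesis using that by blast
qed

text \<open>strip_one acts on pairs (code of a word, counter): it removes a leading 1 of the word
  and increments the counter; on words starting with 0, or empty, it does nothing.\<close>
definition strip_one :: "nat \<Rightarrow> nat" where
  "strip_one x = (if d1 x mod 2 = 0 then (if d1 x = 0 then x else enc ((d1 x - 1) div 2) (Suc (d2 x))) else x)"

lemma trec_strip_one: "trec strip_one"
  unfolding strip_one_def
  by (intro trec_if0 trec_mod2 trec_d1 trec_id trec_pair trec_div2 trec_pred trec_Suc' trec_d2)

lemma strip_one_iter: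
  assumes "rest = [] \<or> hd rest = False"
  shows "(strip_one ^^ k) (enc (bl_code (replicate n True @ rest)) cnt)
       = enc (bl_code (replicate (n - k) True @ rest)) (cnt + min k n)"
proof (induction k arbitrary: n cnt)
  case 0 then show ?case by simp
next
  case (Suc k)
  show ?case
  proof (cases n)
    case 0
    have fixed: "strip_one (enc (bl_code rest) c) = enc (bl_code rest) c" for c
      using assms by (cases rest) (auto simp: strip_one_def)
    have "(strip_one ^^ j) (enc (bl_code rest) c) = enc (bl_code rest) c" for j c
      by (induction j) (auto simp: fixed)
    then show ?thesis using 0 by (simp del: funpow.simps)
  next
    case (Suc n')
    have "strip_one (enc (bl_code (replicate n True @ rest)) cnt)
        = enc (bl_code (replicate n' True @ rest)) (Suc cnt)"
      using Suc by (simp add: strip_one_def)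
    then show ?thesis using Suc.IH[of n' "Suc cnt"] Suc
      by (simp add: funpow_Suc_right del: funpow.simps)
  qed
qed

text \<open>For the code c of a word 0 1^n u with u empty or starting with 0, count_ones c is the
  pair (code of u, n); enough iterations are available because n \<le> (c - 1) div 2.\<close>
definition count_ones :: "nat \<Rightarrow> nat" where
  "count_ones c = (strip_one ^^ ((c - 1) div 2)) (enc ((c - 1) div 2) 0)"

lemma count_ones_code:
  assumes "rest = [] \<or> hd rest = False"
  shows "count_ones (bl_code (False # replicate n True @ rest)) = enc (bl_code rest) n"
proof -
  have "n \<le> bl_code (replicate n True @ rest)"
    using length_le_bl_code[of "replicate n True @ rest"] by simp
  then show ?thesis
    unfolding count_ones_def using strip_one_iter[OF assms, of "bl_code (replicate n True @ rest)" n 0]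
    by simp
qed

text \<open>The merged turn at the word with code c is 0 (player 1) or 1 (player 2), except after
  0 1^n 0 w, where it is the digit v of p at position selected_digit c, which holds the turn
  of game n-1 at w.\<close>
definition merged_turn_code :: "nat \<Rightarrow> nat \<Rightarrow> nat" where
  "merged_turn_code c v =
     (if c = 0 then 0 else if c mod 2 = 0 then 1 else if d1 (count_ones c) = 0 then 1 else v)"

definition selected_digit :: "nat \<Rightarrow> nat" where
  "selected_digit c = enc (d2 (count_ones c) - 1) (2 * ((d1 (count_ones c) - 1) div 2))"

lemma trec_count_ones: "trec count_ones"
  unfolding count_ones_def
  by (intro trec_funpow trec_strip_one trec_pair trec_div2 trec_pred trec_id trec_const)

lemma trec_selected_digit: "trec selected_digit"
  unfolding selected_digit_def
  by (intro trec_pair trec_pred trec_d2' trec_d1' trec_mult trec_div2 trec_comp[OF trec_count_ones]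
      trec_const trec_id)

lemma trec_merged_turn_code: "trec (\<lambda>x. merged_turn_code (d1 x) (d2 x))"
  unfolding merged_turn_code_def
  by (intro trec_if0 trec_mod2 trec_d1 trec_d2 trec_d1' trec_comp[OF trec_count_ones] trec_const)

lemma merged_turn_code_correct:
  "merged_turn_code (bl_code w) (p (selected_digit (bl_code w))) = 0 \<longleftrightarrow>
   merged_turn (seq_turns p) w = P1"
proof (cases w)
  case Nil then show ?thesis by (simp add: merged_turn_code_def merged_turn_simps)
next
  case (Cons b u)
  show ?thesis
  proof (cases b)
    case True
    then show ?thesis using Cons by (simp add: merged_turn_code_def merged_turn_simps)
  next
    case False
    consider n where "u = replicate n True" | n w' where "u = replicate n True @ False # w'"
      by (rule ones_word_cases)
    then show ?thesis
    proof cases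
      case 1
      then have "count_ones (bl_code w) = enc 0 n"
        using count_ones_code[of "[]" n] Cons False by simp
      then show ?thesis using Cons False 1 by (simp add: merged_turn_code_def merged_turn_simps)
    next
      case 2
      then have "count_ones (bl_code w) = enc (2 * bl_code w' + 1) n"
        using count_ones_code[of "False # w'" n] Cons False by simp
      then show ?thesis using Cons False 2
        by (simp add: merged_turn_code_def selected_digit_def merged_turn_simps seq_turns_def)
    qed
  qed
qed

lemma bpair_odd: "bpair a b (2 * m + 1) = b m" by (simp add: bpair_def)
lemma bsnd_bpair: "bsnd (bpair a b) = b" by (simp add: bsnd_def bpair_def)
lemma bfst_bpair: "bfst (bpair a b) = a" by (simp add: bfst_def bpair_def)

text \<open>The admissible answers to an instance of FindWS are exactly the winning strategies of
  player 1, since the two players cannot both have winning strategies.\<close>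
lemma mem_FindWS: "s \<in> FindWS (d, A) \<longleftrightarrow> winning d A P1 s"
  using not_both_winning[of d A _ s] by (auto simp: FindWS_def)

lemma FindWS_le_parallelization:
  "weihrauch_le (game_rep delta) profile_rep FindWS
     (seq_rep (game_rep delta)) (seq_rep profile_rep) (parallelization FindWS)"
proof -
  obtain MH where pMH: "partrec MH" and MH: "\<And>p. t2_computes MH p (\<lambda>n. p (d2 n))"
    using index_machine[OF trec_d2] by blast
  have "trec (\<lambda>n. 2 * enc 0 n + 1)" by (intro trec_add trec_mult trec_pair trec_const trec_id)
  then obtain MK where pMK: "partrec MK" and MK: "\<And>p. t2_computes MK p (\<lambda>n. p (2 * enc 0 n + 1))"
    using index_machine by blast
  show ?thesis
  proof (rule weihrauch_leI[OF pMH pMK])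
    fix p x assume x: "game_rep delta p = Some x" and sol: "FindWS x \<noteq> {}"
    define h where "h = (\<lambda>n. p (d2 n))"
    have h: "seq_rep (game_rep delta) h = Some (\<lambda>i. x)"
      using x by (simp add: seq_rep_def h_def bcomp_def)
    have "parallelization FindWS (\<lambda>i. x) \<noteq> {}"
      using sol unfolding parallelization_def by auto
    moreover have "\<exists>k y. t2_computes MK (bpair p q) k \<and> profile_rep k = Some y \<and> y \<in> FindWS x"
      if "seq_rep profile_rep q = Some v" "v \<in> parallelization FindWS (\<lambda>i. x)" for q v
    proof -
      have "profile_rep (bcomp q 0) = Some (v 0)" "v 0 \<in> FindWS x"
        using that by (auto simp: seq_rep_def profile_rep_def parallelization_def split: if_splits)
      moreover have "(\<lambda>n. bpair p q (2 * enc 0 n + 1)) = bcomp q 0"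
        by (simp add: bpair_def bcomp_def)
      ultimately show ?thesis using MK[of "bpair p q"] by metis
    qed
    ultimately show "\<exists>h u. t2_computes MH p h \<and> seq_rep (game_rep delta) h = Some u \<and>
        parallelization FindWS u \<noteq> {} \<and>
        (\<forall>q v. seq_rep profile_rep q = Some v \<longrightarrow> v \<in> parallelization FindWS u \<longrightarrow>
          (\<exists>k y. t2_computes MK (bpair p q) k \<and> profile_rep k = Some y \<and> y \<in> FindWS x))"
      using MH[of p] h unfolding h_def by blast
  qed
qed

lemma seq_game_rep_components:
  assumes "seq_rep (game_rep delta) p = Some xs"
  obtains As where "\<And>i. delta (bsnd (bcomp p i)) = Some (As i)" "xs = (\<lambda>i. (seq_turns p i, As i))"
proof -
  have named: "\<forall>i. game_rep delta (bcomp p i) \<noteq> None"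
    and xs: "xs = (\<lambda>i. the (game_rep delta (bcomp p i)))"
    using assms by (auto simp: seq_rep_def split: if_splits)
  define As where "As = (\<lambda>i. the (delta (bsnd (bcomp p i))))"
  have As: "delta (bsnd (bcomp p i)) = Some (As i)" for i
    using named unfolding As_def by (auto simp: game_rep_def split: option.splits)
  have "xs = (\<lambda>i. (seq_turns p i, As i))"
    unfolding xs by (rule ext) (simp add: As game_rep_def, simp add: bfst_def bcomp_def seq_turns_def fun_eq_iff)
  with As that show ?thesis by blast
qed

text \<open>The name of the winning set of the merged game is computed by applying the closure
  under comb twice: first to the shifted sequence of winning sets, then to a constant sequence.\<close>
lemma merged_set_machine:
  assumes "closed_under_comb delta"
  shows "\<exists>MW. partrec MW \<and> (\<forall>p As. (\<forall>i. delta (bsnd (bcomp p i)) = Some (As i)) \<longrightarrow>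
           (\<exists>q. t2_computes MW p q \<and> delta q = Some (merged_set As)))"
proof -
  obtain phi where pphi: "partrec phi" and phi: "\<And>rs As. (\<forall>n. delta (rs n) = Some (As n)) \<Longrightarrow>
      \<exists>q. t2_computes phi (btuple rs) q \<and> delta q = Some (comb As)"
    using assms unfolding closed_under_comb_def comb_def by blast
  have "trec (\<lambda>n. enc (d1 n - 1) (2 * d2 n + 1))"
    by (intro trec_pair trec_pred trec_add trec_mult trec_d1 trec_d2 trec_const)
  then obtain M1 where pM1: "partrec M1"
      and M1: "\<And>p. t2_computes M1 p (\<lambda>n. p (enc (d1 n - 1) (2 * d2 n + 1)))"
    using index_machine by blast
  obtain M2 where pM2: "partrec M2" and M2: "\<And>p. t2_computes M2 p (\<lambda>n. p (d2 n))"
    using index_machine[OF trec_d2] by blast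
  obtain C1 where pC1: "partrec C1"
      and C1: "\<And>p q r. t2_computes M1 p q \<Longrightarrow> t2_computes phi q r \<Longrightarrow> t2_computes C1 p r"
    using compose[OF pM1 pphi] by blast
  obtain C2 where pC2: "partrec C2"
      and C2: "\<And>p q r. t2_computes C1 p q \<Longrightarrow> t2_computes M2 q r \<Longrightarrow> t2_computes C2 p r"
    using compose[OF pC1 pM2] by blast
  obtain C3 where pC3: "partrec C3"
      and C3: "\<And>p q r. t2_computes C2 p q \<Longrightarrow> t2_computes phi q r \<Longrightarrow> t2_computes C3 p r"
    using compose[OF pC2 pphi] by blast
  have "\<exists>q. t2_computes C3 p q \<and> delta q = Some (merged_set As)"
    if As: "\<forall>i. delta (bsnd (bcomp p i)) = Some (As i)" for p As
  proof -
    have "\<forall>n. delta (bsnd (bcomp p (n - 1))) = Some (As (n - 1))" using As by simp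
    then obtain inner where phi_inner: "t2_computes phi (btuple (\<lambda>i. bsnd (bcomp p (i - 1)))) inner"
        and inner: "delta inner = Some (comb (\<lambda>m. As (m - 1)))"
      using phi[of "\<lambda>i. bsnd (bcomp p (i - 1))" "\<lambda>m. As (m - 1)"] by blast
    have "btuple (\<lambda>i. bsnd (bcomp p (i - 1))) = (\<lambda>n. p (enc (d1 n - 1) (2 * d2 n + 1)))"
      by (auto simp: btuple_def bsnd_def bcomp_def case_prod_beta)
    then have "t2_computes C1 p inner" using M1 C1 phi_inner by metis
    then have C2_inner: "t2_computes C2 p (\<lambda>n. inner (d2 n))" using M2 C2 by blast
    obtain outer where phi_outer: "t2_computes phi (btuple (\<lambda>_. inner)) outer"
        and outer: "delta outer = Some (merged_set As)"
      using phi[of "\<lambda>_. inner" "\<lambda>_. comb (\<lambda>m. As (m - 1))"] inner unfolding merged_set_def by blast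
    have "btuple (\<lambda>_. inner) = (\<lambda>n. inner (d2 n))"
      by (auto simp: btuple_def case_prod_beta)
    then have "t2_computes C3 p outer" using C2_inner C3 phi_outer by metis
    with outer show ?thesis by blast
  qed
  with pC3 show ?thesis by blast
qed

lemma merged_game_machine:
  assumes "closed_under_comb delta"
  shows "\<exists>MH. partrec MH \<and> (\<forall>p As. (\<forall>i. delta (bsnd (bcomp p i)) = Some (As i)) \<longrightarrow>
           (\<exists>h. t2_computes MH p h \<and>
                game_rep delta h = Some (merged_turn (seq_turns p), merged_set As)))"
proof -
  obtain MT where pMT: "partrec MT"
      and MT: "\<And>p. t2_computes MT p (\<lambda>n. merged_turn_code n (p (selected_digit n)))"
    using digit_machine[OF trec_selected_digit trec_merged_turn_code] by auto
  obtain MW where pMW: "partrec MW" and MW: "\<And>p As. \<forall>i. delta (bsnd (bcomp p i)) = Some (As i) \<Longrightarrow>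
      \<exists>q. t2_computes MW p q \<and> delta q = Some (merged_set As)"
    using merged_set_machine[OF assms] by blast
  obtain MH where pMH: "partrec MH" and MH: "\<And>p qa qb. t2_computes MT p qa \<Longrightarrow>
      t2_computes MW p qb \<Longrightarrow> t2_computes MH p (bpair qa qb)"
    using bpair_machine[OF pMT pMW] by blast
  have "\<exists>h. t2_computes MH p h \<and> game_rep delta h = Some (merged_turn (seq_turns p), merged_set As)"
    if As: "\<forall>i. delta (bsnd (bcomp p i)) = Some (As i)" for p As
  proof -
    obtain q where q: "t2_computes MW p q" "delta q = Some (merged_set As)" using MW[OF As] by blast
    let ?turn = "\<lambda>n. merged_turn_code n (p (selected_digit n))"
    have "(\<lambda>w. if ?turn (bl_code w) = 0 then P1 else P2) = merged_turn (seq_turns p)"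
      by (rule ext) (metis merged_turn_code_correct player.exhaust)
    then have "game_rep delta (bpair ?turn q) = Some (merged_turn (seq_turns p), merged_set As)"
      by (simp add: game_rep_def bsnd_bpair bfst_bpair q(2))
    with MH[OF MT q(1)] show ?thesis by blast
  qed
  with pMH show ?thesis by blast
qed

lemma component_strategies_machine:
  "\<exists>MK. partrec MK \<and> (\<forall>p q. \<exists>k. t2_computes MK (bpair p q) k \<and>
     seq_rep profile_rep k = Some (\<lambda>i w. q (bl_code (False # replicate (Suc i) True @ False # w)) \<noteq> 0))"
proof -
  define pos where "pos = (\<lambda>m. 2 * (2 * (((\<lambda>x. 2 * x + 2) ^^ Suc (d1 m)) (2 * d2 m + 1)) + 1) + 1)"
  have "trec pos" unfolding pos_def
    by (intro trec_add trec_mult trec_funpow trec_Suc' trec_d1 trec_d2 trec_const trec_id)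
  then obtain MK where pMK: "partrec MK" and MK: "\<And>r. t2_computes MK r (\<lambda>m. r (pos m))"
    using index_machine by blast
  have "bcomp (\<lambda>m. bpair p q (pos m)) i (bl_code w)
      = q (bl_code (False # replicate (Suc i) True @ False # w))" for p q i w
    using bl_code_ones[of "Suc i" "False # w"]
    unfolding bcomp_def pos_def by (simp only: prod_encode_inverse fst_conv snd_conv bpair_odd) simp
  then have "seq_rep profile_rep (\<lambda>m. bpair p q (pos m))
      = Some (\<lambda>i w. q (bl_code (False # replicate (Suc i) True @ False # w)) \<noteq> 0)" for p q
    by (simp add: seq_rep_def profile_rep_def)
  with pMK MK show ?thesis by blast
qed

lemma parallelization_le_FindWS:
  assumes "closed_under_comb delta"
  shows "weihrauch_le (seq_rep (game_rep delta)) (seq_rep profile_rep) (parallelization FindWS)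
     (game_rep delta) profile_rep FindWS"
proof -
  obtain MH where pMH: "partrec MH" and MH: "\<And>p As. \<forall>i. delta (bsnd (bcomp p i)) = Some (As i) \<Longrightarrow>
      \<exists>h. t2_computes MH p h \<and> game_rep delta h = Some (merged_turn (seq_turns p), merged_set As)"
    using merged_game_machine[OF assms] by blast
  obtain MK where pMK: "partrec MK" and MK: "\<And>p q. \<exists>k. t2_computes MK (bpair p q) k \<and>
      seq_rep profile_rep k = Some (\<lambda>i w. q (bl_code (False # replicate (Suc i) True @ False # w)) \<noteq> 0)"
    using component_strategies_machine by blast
  show ?thesis
  proof (rule weihrauch_leI[OF pMH pMK])
    fix p xs assume xs: "seq_rep (game_rep delta) p = Some xs" and sol: "parallelization FindWS xs \<noteq> {}"
    obtain As where As: "\<And>i. delta (bsnd (bcomp p i)) = Some (As i)"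
        and xs_eq: "xs = (\<lambda>i. (seq_turns p i, As i))"
      using seq_game_rep_components[OF xs] by blast
    obtain ss where "\<And>i. winning (seq_turns p i) (As i) P1 (ss i)"
      using sol by (auto simp: parallelization_def xs_eq mem_FindWS)
    then have merged_win: "merged_strategy ss \<in> FindWS (merged_turn (seq_turns p), merged_set As)"
      by (simp add: mem_FindWS merged_strategy_wins)
    obtain h where "t2_computes MH p h"
        "game_rep delta h = Some (merged_turn (seq_turns p), merged_set As)"
      using MH As by blast
    moreover have "\<exists>k y. t2_computes MK (bpair p q) k \<and> seq_rep profile_rep k = Some y \<and>
        y \<in> parallelization FindWS xs"
      if "profile_rep q = Some s" "s \<in> FindWS (merged_turn (seq_turns p), merged_set As)" for q s
    proof -
      have "winning (merged_turn (seq_turns p)) (merged_set As) P1 (\<lambda>w. q (bl_code w) \<noteq> 0)"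
        using that by (simp add: profile_rep_def mem_FindWS)
      then have "winning (seq_turns p i) (As i) P1
          (\<lambda>w. q (bl_code (False # replicate (Suc i) True @ False # w)) \<noteq> 0)" for i
        by (rule component_strategy_wins)
      then have "(\<lambda>i w. q (bl_code (False # replicate (Suc i) True @ False # w)) \<noteq> 0)
          \<in> parallelization FindWS xs"
        by (simp add: parallelization_def xs_eq mem_FindWS)
      with MK[of p q] show ?thesis by blast
    qed
    ultimately show "\<exists>h u. t2_computes MH p h \<and> game_rep delta h = Some u \<and> FindWS u \<noteq> {} \<and>
        (\<forall>q v. profile_rep q = Some v \<longrightarrow> v \<in> FindWS u \<longrightarrow>
          (\<exists>k y. t2_computes MK (bpair p q) k \<and> seq_rep profile_rep k = Some y \<and>
             y \<in> parallelization FindWS xs))"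
      using merged_win by blast
  qed
qed

theorem proposition20:
  fixes delta :: "(nat \<Rightarrow> bool) set rep"
  assumes "standing_assumptions delta"
    and "closed_under_comb delta"
  shows "weihrauch_eq (game_rep delta) profile_rep FindWS
           (seq_rep (game_rep delta)) (seq_rep profile_rep) (parallelization FindWS)"
  unfolding weihrauch_eq_def
  using FindWS_le_parallelization parallelization_le_FindWS[OF assms(2)] by blast

end
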